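(* There is an uncountable set of triples of decision points $(d_1,d_2,d_3)\in(0,1)^3$ for each of which the triangle process has a nonperiodic trajectory.
   Context: Triangle process. Fix $\lambda_1,\lambda_2,\lambda_3>0$, $\mu_1,\mu_2,\mu_3>0$ with $\rho_i:=\lambda_i/\mu_i<1$ for each $i$ and $\rho_1+\rho_2+\rho_3>1$. Put $\theta_j:=\mu_j^{-1}(\lambda_1+\lambda_2+\lambda_3)-1$. Let $e_1,e_2,e_3$ be the standard basis of $\mathbb R^3$, $A_i^0:=\{y\in\mathbb R^3: y_1+y_2+y_3=1,\ y_i=0,\ y_l\ge0\ \forall l\}$ and $A^0:=A_1^0\cup A_2^0\cup A_3^0$. For $j\in\{1,2,3\}$ and $z\in A^0\setminus A_j^0$ let $f_j(z):=\sum_{i\neq j}\frac{(\mu_j-\lambda_j)z_i+\lambda_i z_j}{(\mu_j-\lambda_j)+\mu_j\theta_j z_j}\,e_i\in A_j^0$. Let $(\hat i,\hat j,\hat k)$ denote $(1,2,3)$ or one of its cyclic permutations; the point $(1-x)e_{\hat j}+xe_{\hat k}\in A^0_{\hat i}$, $x\in[0,1]$, is written $(x,\hat i)$, with $\mathrm{Side}((x,\hat i)):=\hat i$. Decision points are numbers $d_1,d_2,d_3\in(0,1)$, identified with the points $(d_{\hat i},\hat i)$. The switching rule is $\mathfrak R((x,\hat i))=\hat j$ if $x<d_{\hat i}$, $=\hat k$ if $x>d_{\hat i}$, and both values are allowed if $x=d_{\hat i}$. The map is $\varphi(z):=f_{\mathfrak R(z)}(z)$. A trajectory is a sequence $(z(t))_{t\ge0}$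 with $z(t+1)\in\varphi(z(t))$. It is eventually $m$-periodic if there is $N$ with $\mathrm{Side}(z(n+m))=\mathrm{Side}(z(n))$ for all $n\ge N$, and nonperiodic if it is eventually $m$-periodic for no $m\ge1$. *)

theory Defs
  imports Complex_Main "HOL-Library.Countable_Set"
begin

text \<open>Sides/coordinates are indexed by 1,2,3. The cyclic successor of i.\<close>
definition nxt :: "nat \<Rightarrow> nat" where
  "nxt i = i mod 3 + 1"

text \<open>The point (x, i) = (1-x) e_j + x e_k of side A_i^0, with (i,j,k) cyclic.
  Points of R^3 are functions nat => real, coordinates 1,2,3 (others 0).\<close>
definition pt :: "real \<times> nat \<Rightarrow> (nat \<Rightarrow> real)" where
  "pt p = (\<lambda>l. if l = nxt (snd p) then 1 - fst p
              else if l = nxt (nxt (snd p)) then fst p else 0)"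

definition side :: "real \<times> nat \<Rightarrow> nat" where
  "side p = snd p"

definition theta :: "(nat \<Rightarrow> real) \<Rightarrow> (nat \<Rightarrow> real) \<Rightarrow> nat \<Rightarrow> real" where
  "theta lam mu j = (lam 1 + lam 2 + lam 3) / mu j - 1"

definition fmap :: "(nat \<Rightarrow> real) \<Rightarrow> (nat \<Rightarrow> real) \<Rightarrow> nat \<Rightarrow> (nat \<Rightarrow> real) \<Rightarrow> (nat \<Rightarrow> real)" where
  "fmap lam mu j z = (\<lambda>i. if i \<in> {1,2,3} \<and> i \<noteq> j then
      ((mu j - lam j) * z i + lam i * z j) / ((mu j - lam j) + mu j * theta lam mu j * z j)
     else 0)"

text \<open>Switching rule: rule d p j means j is an allowed value of R(p).\<close>
definition rule :: "(nat \<Rightarrow> real) \<Rightarrow> real \<times> nat \<Rightarrow> nat \<Rightarrow> bool" where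
  "rule d p j \<longleftrightarrow>
     (fst p < d (snd p) \<and> j = nxt (snd p)) \<or>
     (fst p > d (snd p) \<and> j = nxt (nxt (snd p))) \<or>
     (fst p = d (snd p) \<and> (j = nxt (snd p) \<or> j = nxt (nxt (snd p))))"

definition trajectory :: "(nat \<Rightarrow> real) \<Rightarrow> (nat \<Rightarrow> real) \<Rightarrow> (nat \<Rightarrow> real) \<Rightarrow> (nat \<Rightarrow> real \<times> nat) \<Rightarrow> bool" where
  "trajectory lam mu d z \<longleftrightarrow>
     (\<forall>t. snd (z t) \<in> {1,2,3} \<and> fst (z t) \<in> {0..1} \<and>
        (\<exists>j. rule d (z t) j \<and> side (z (Suc t)) = j \<and>
             pt (z (Suc t)) = fmap lam mu j (pt (z t))))"

definition eventually_periodic :: "(nat \<Rightarrow> real \<times> nat) \<Rightarrow> nat \<Rightarrow> bool" where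
  "eventually_periodic z m \<longleftrightarrow> (\<exists>N. \<forall>n\<ge>N. side (z (n + m)) = side (z n))"

definition nonperiodic :: "(nat \<Rightarrow> real \<times> nat) \<Rightarrow> bool" where
  "nonperiodic z \<longleftrightarrow> (\<forall>m\<ge>1. \<not> eventually_periodic z m)"

definition dfun :: "real \<times> real \<times> real \<Rightarrow> nat \<Rightarrow> real" where
  "dfun d i = (if i = 1 then fst d else if i = 2 then fst (snd d) else snd (snd d))"

end

theory Submission
  imports Defs "HOL-Analysis.Analysis"
begin

text \<open>Fix \<open>d\<^sub>1 = s\<close>. A point \<open>(x, 1)\<close> of side 1 moves to side 2 if \<open>x < s\<close> and to side 3 if
  \<open>x > s\<close>; when \<open>d\<^sub>2\<close> is small and \<open>d\<^sub>3\<close> is close to 1 it then returns at once to side 1. The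
  first return map to side 1 is thus \<open>A\<close> on \<open>[0, s]\<close> and \<open>B\<close> on \<open>[s, 1]\<close>, where \<open>A\<close> and \<open>B\<close> are
  increasing linear fractional maps of \<open>[0, 1]\<close> with \<open>B \<circ> A \<le> A \<circ> B\<close>. Gluing the ends of the
  window \<open>[B s, A s]\<close> turns this switched map into a monotone circle map of degree one, so along
  every orbit the number of \<open>B\<close>-steps in a block of length \<open>n\<close> is \<open>n \<rho>(s)\<close> up to a bounded error.
  The parameters with \<open>\<rho>(s) \<ge> \<alpha>\<close> and with \<open>\<rho>(s) \<le> \<alpha>\<close> form two closed sets covering an interval,
  so some \<open>s\<close> has an irrational rotation number \<open>\<alpha>\<close>; its itinerary, i.e. the sequence of sides
  visited, is then not eventually periodic. Every \<open>d\<^sub>2\<close> below the image of \<open>(s, 1)\<close> on side 2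
  works, which gives uncountably many triples.\<close>

lemma fixpoint_free_side:
  fixes f :: "real \<Rightarrow> real"
  assumes cont: "continuous_on {a..b} f" and free: "\<And>y. y \<in> {a..b} \<Longrightarrow> f y \<noteq> y"
    and x: "x \<in> {a..b}" and y: "y \<in> {a..b}" and below: "f x < x"
  shows "f y < y"
proof (rule ccontr)
  assume "\<not> f y < y"
  with free y have above: "y < f y" by fastforce
  define g where "g t = f t - t" for t
  have "continuous_on {min x y..max x y} g"
    unfolding g_def using x y by (intro continuous_intros continuous_on_subset[OF cont]) auto
  moreover have "g x \<le> 0" "0 \<le> g y" using below above by (auto simp: g_def)
  ultimately obtain t where "min x y \<le> t" "t \<le> max x y" "g t = 0"
    using IVT'[of g x 0 y] IVT2'[of g x 0 y] by (cases "x \<le> y") (auto simp: min_def max_def)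
  moreover have "t \<in> {a..b}" using x y \<open>min x y \<le> t\<close> \<open>t \<le> max x y\<close> by auto
  ultimately show False using free by (auto simp: g_def)
qed

lemma exists_irrational_between:
  fixes a b :: real
  assumes "a < b"
  shows "\<exists>\<alpha>\<in>{a<..<b}. \<alpha> \<notin> \<rat>"
proof (rule ccontr)
  assume "\<not> ?thesis"
  then have "{a<..<b} \<subseteq> \<rat>" by auto
  then have "countable {a<..<b}" using countable_rat countable_subset by blast
  then show False using uncountable_open_interval[of a b] assms by simp
qed

lemma multiples_bounded_imp_zero:
  fixes \<delta> C :: real
  assumes "\<And>k. k \<ge> 1 \<Longrightarrow> \<bar>real k * \<delta>\<bar> \<le> C"
  shows "\<delta> = 0"
proof (rule ccontr)
  assume "\<delta> \<noteq> 0"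
  obtain k :: nat where k: "C / \<bar>\<delta>\<bar> < k" using reals_Archimedean2 by blast
  then have "k \<ge> 1" using assms[of 1] \<open>\<delta> \<noteq> 0\<close> by (cases k) (auto simp: field_simps)
  moreover have "C < real k * \<bar>\<delta>\<bar>" using k \<open>\<delta> \<noteq> 0\<close> by (simp add: field_simps)
  ultimately show False using assms[of k] by (simp add: abs_mult)
qed

lemma periodic_block_sum:
  fixes w :: "nat \<Rightarrow> bool"
  assumes periodic: "\<forall>n\<ge>N. w (n + q) = w n"
  shows "(\<Sum>t\<in>{N..<N + m * q}. of_bool (w t) :: nat) = m * (\<Sum>t\<in>{N..<N + q}. of_bool (w t))"
proof -
  define g :: "nat \<Rightarrow> nat" where "g t = of_bool (w t)" for t
  have shift: "g (t + k * q) = g t" if "N \<le> t" for t k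
  proof (induction k)
    case (Suc k)
    have "w (t + Suc k * q) = w (t + k * q + q)" by (simp add: algebra_simps)
    also have "\<dots> = w (t + k * q)" using periodic that by simp
    finally show ?case using Suc by (simp add: g_def)
  qed simp
  have "sum g {N..<N + m * q} = m * sum g {N..<N + q}"
  proof (induction m)
    case (Suc m)
    have "sum g {N + m * q..<N + Suc m * q} = sum g {N + m * q..<N + q + m * q}"
      by (simp add: algebra_simps)
    also have "\<dots> = (\<Sum>t\<in>{N..<N + q}. g (t + m * q))"
      by (rule sum.shift_bounds_nat_ivl)
    also have "\<dots> = sum g {N..<N + q}"
      by (rule sum.cong) (auto simp: shift)
    moreover have "sum g {N..<N + Suc m * q} = sum g {N..<N + m * q} + sum g {N + m * q..<N + Suc m * q}"
      by (rule sum.atLeastLessThan_concat[symmetric]) auto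
    ultimately show ?case using Suc by simp
  qed simp
  then show ?thesis unfolding g_def[abs_def] .
qed

section \<open>Switching between two increasing maps of the unit interval\<close>

definition count_B :: "bool list \<Rightarrow> nat \<Rightarrow> nat" where
  "count_B ws t = (\<Sum>i<t. of_bool (ws ! i))"

lemma count_B_0 [simp]: "count_B ws 0 = 0"
  by (simp add: count_B_def)

lemma count_B_Suc [simp]: "count_B ws (Suc t) = count_B ws t + of_bool (ws ! t)"
  by (simp add: count_B_def)

lemma count_B_le: "count_B ws t \<le> t"
  by (induction t) auto

locale gap_maps =
  fixes A B :: "real \<Rightarrow> real"
  assumes continuous_A: "continuous_on {0..1} A" and continuous_B: "continuous_on {0..1} B"
    and strict_mono_A: "strict_mono_on {0..1} A" and strict_mono_B: "strict_mono_on {0..1} B"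
    and A_0: "0 < A 0" and A_1: "A 1 = 1" and B_0: "B 0 = 0" and B_1: "B 1 \<le> 1"
    and no_common_fixpoint: "\<And>y. y \<in> {0..1} \<Longrightarrow> y < A y \<or> B y < y"
    and gap: "\<And>s. s \<in> {0..1} \<Longrightarrow> B (A s) \<le> A (B s)"
begin

lemma A_mono: "x \<in> {0..1} \<Longrightarrow> y \<in> {0..1} \<Longrightarrow> x \<le> y \<Longrightarrow> A x \<le> A y"
  by (rule strict_mono_on_leD[OF strict_mono_A])

lemma B_mono: "x \<in> {0..1} \<Longrightarrow> y \<in> {0..1} \<Longrightarrow> x \<le> y \<Longrightarrow> B x \<le> B y"
  by (rule strict_mono_on_leD[OF strict_mono_B])

lemma A_less: "x \<in> {0..1} \<Longrightarrow> y \<in> {0..1} \<Longrightarrow> x < y \<Longrightarrow> A x < A y"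
  by (rule strict_mono_onD[OF strict_mono_A])

lemma B_less: "x \<in> {0..1} \<Longrightarrow> y \<in> {0..1} \<Longrightarrow> x < y \<Longrightarrow> B x < B y"
  by (rule strict_mono_onD[OF strict_mono_B])

lemma A_in_01: "x \<in> {0..1} \<Longrightarrow> A x \<in> {0..1}"
  using A_mono[of 0 x] A_mono[of x 1] A_0 A_1 by auto

lemma B_in_01: "x \<in> {0..1} \<Longrightarrow> B x \<in> {0..1}"
  using B_mono[of 0 x] B_mono[of x 1] B_0 B_1 by auto

text \<open>Switching points range over \<open>[fixB, fixA]\<close>; for these, \<open>s\<close> lies in the window
  \<open>[B s, A s]\<close>, which the switched map preserves.\<close>
definition fixA :: real where
  "fixA = Inf {y \<in> {0..1}. A y = y}"

definition fixB :: real where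
  "fixB = Sup {y \<in> {0..fixA}. B y = y}"

lemma fixA: "fixA \<in> {0..1}" "A fixA = fixA"
proof -
  have "closed {y \<in> {0..1}. A y - y = 0}"
    by (intro continuous_closed_preimage_constant continuous_intros continuous_A closed_atLeastAtMost)
  then have "fixA \<in> {y \<in> {0..1}. A y = y}"
    unfolding fixA_def using A_1 by (intro closed_contains_Inf) (auto intro: bdd_belowI[of _ 0])
  then show "fixA \<in> {0..1}" "A fixA = fixA" by auto
qed

lemma A_above_diagonal: assumes "0 \<le> y" "y < fixA" shows "y < A y"
proof -
  have "A t \<noteq> t" if "t \<in> {0..y}" for t
  proof
    assume "A t = t"
    with that fixA(1) assms have "fixA \<le> t"
      unfolding fixA_def by (intro cInf_lower) (auto intro: bdd_belowI[of _ 0])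
    with that assms show False by simp
  qed
  moreover have "continuous_on {0..y} A"
    using assms fixA(1) by (auto intro: continuous_on_subset[OF continuous_A])
  ultimately show ?thesis
    using fixpoint_free_side[of 0 y A y 0] A_0 assms by force
qed

lemma B_fixA_less: "B fixA < fixA"
  using no_common_fixpoint[OF fixA(1)] fixA(2) by simp

lemma fixB: "fixB \<in> {0..fixA}" "B fixB = fixB"
proof -
  have "closed {y \<in> {0..fixA}. B y - y = 0}"
    using fixA(1) by (intro continuous_closed_preimage_constant continuous_intros
        continuous_on_subset[OF continuous_B]) auto
  then have "fixB \<in> {y \<in> {0..fixA}. B y = y}"
    unfolding fixB_def using B_0 fixA(1)
    by (intro closed_contains_Sup) (auto intro: bdd_aboveI[of _ fixA])
  then show "fixB \<in> {0..fixA}" "B fixB = fixB" by auto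
qed

lemma fixB_less_fixA: "fixB < fixA"
  using fixB B_fixA_less by (cases "fixB = fixA") auto

lemma B_below_diagonal: assumes "fixB < y" "y \<le> fixA" shows "B y < y"
proof -
  have "B t \<noteq> t" if "t \<in> {y..fixA}" for t
  proof
    assume "B t = t"
    with that fixB(1) assms have "t \<le> fixB"
      unfolding fixB_def by (intro cSup_upper) (auto intro: bdd_aboveI[of _ fixA])
    with that assms show False by simp
  qed
  moreover have "continuous_on {y..fixA} B"
    using assms fixA(1) fixB(1) by (auto intro: continuous_on_subset[OF continuous_B])
  ultimately show ?thesis
    using fixpoint_free_side[of y fixA B fixA y] B_fixA_less assms by force
qed

lemma A_ge_below_fixA: "0 \<le> y \<Longrightarrow> y \<le> fixA \<Longrightarrow> y \<le> A y"
  using A_above_diagonal[of y] fixA(2) by (cases "y = fixA") auto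

lemma B_le_above_fixB: "fixB \<le> y \<Longrightarrow> y \<le> fixA \<Longrightarrow> B y \<le> y"
  using B_below_diagonal[of y] fixB(2) by (cases "y = fixB") auto

lemma window_bounds:
  assumes "s \<in> {fixB..fixA}"
  shows "0 \<le> B s" "B s \<le> s" "s \<le> A s" "A s \<le> fixA"
proof -
  have s: "s \<in> {0..1}" using assms fixA(1) fixB(1) by auto
  show "0 \<le> B s" using B_in_01[OF s] by simp
  show "B s \<le> s" using B_le_above_fixB assms by simp
  show "s \<le> A s" using A_ge_below_fixA assms s by simp
  show "A s \<le> fixA" using A_mono[OF s fixA(1)] assms fixA(2) by simp
qed

lemma step_in_window:
  assumes s: "s \<in> {fixB..fixA}" and x: "x \<in> {B s..A s}"
    and allowed: "if c then s \<le> x else x \<le> s"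
  shows "(if c then B else A) x \<in> {B s..A s}"
proof -
  note bounds = window_bounds[OF s] window_bounds[of "A s"]
  have in_01: "s \<in> {0..1}" "x \<in> {0..1}" "A s \<in> {0..1}" "B s \<in> {0..1}"
    using s x bounds fixA(1) fixB(1) by auto
  show ?thesis
  proof (cases c)
    case True
    then have "B s \<le> B x" "B x \<le> B (A s)" using allowed x B_mono in_01 by auto
    moreover have "B (A s) \<le> A s" using bounds s by simp
    ultimately show ?thesis using True by simp
  next
    case False
    then have "A (B s) \<le> A x" "A x \<le> A s" using allowed x A_mono in_01 by auto
    moreover have "B s \<le> A (B s)" using A_ge_below_fixA bounds by simp
    ultimately show ?thesis using False by simp
  qed
qed

primrec word_orbit :: "bool list \<Rightarrow> real \<Rightarrow> nat \<Rightarrow> real" where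
  "word_orbit ws x 0 = x"
| "word_orbit ws x (Suc t) = (if ws ! t then B else A) (word_orbit ws x t)"

text \<open>Both letters are allowed at the switching point itself; this makes the set of admissible
  pairs \<open>(s, x)\<close> closed.\<close>
definition admissible :: "real \<Rightarrow> bool list \<Rightarrow> real \<Rightarrow> bool" where
  "admissible s ws x \<longleftrightarrow> x \<in> {B s..A s} \<and>
     (\<forall>t<length ws. if ws ! t then s \<le> word_orbit ws x t else word_orbit ws x t \<le> s)"

lemma word_orbit_in_window:
  assumes "s \<in> {fixB..fixA}" "admissible s ws x" "t \<le> length ws"
  shows "word_orbit ws x t \<in> {B s..A s}"
  using assms(3)
proof (induction t)
  case 0
  then show ?case using assms(2) by (simp add: admissible_def)
next
  case (Suc t)
  then show ?case
    using step_in_window[OF assms(1) Suc.IH] assms(2) by (simp add: admissible_def)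
qed

text \<open>At the end points the frequency of \<open>B\<close> degenerates: at \<open>fixA\<close> the letter \<open>B\<close> can only
  be applied at \<open>fixA\<close> itself, after which the orbit stays below \<open>fixA\<close>; symmetrically for \<open>fixB\<close>.\<close>
lemma admissible_fixA_count:
  assumes adm: "admissible fixA ws x"
  shows "count_B ws (length ws) \<le> 1"
proof -
  have fixA_window: "fixA \<in> {fixB..fixA}" using fixB_less_fixA by simp
  have "count_B ws t \<le> 1 \<and> (count_B ws t = 1 \<longrightarrow> word_orbit ws x t < fixA)"
    if "t \<le> length ws" for t
    using that
  proof (induction t)
    case (Suc t)
    let ?y = "word_orbit ws x t"
    have y: "?y \<in> {B fixA..fixA}"
      using word_orbit_in_window[OF fixA_window adm, of t] Suc.prems fixA(2) by simp
    have allowed: "if ws ! t then fixA \<le> ?y else ?y \<le> fixA"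
      using adm Suc.prems by (simp add: admissible_def)
    show ?case
    proof (cases "ws ! t")
      case True
      then have "?y = fixA" using y allowed by simp
      then show ?thesis using Suc True B_fixA_less by auto
    next
      case False
      have "A ?y < fixA" if "?y < fixA"
        using A_less[of ?y fixA] that y fixA window_bounds[OF fixA_window] by auto
      then show ?thesis using Suc False by auto
    qed
  qed simp
  then show ?thesis by simp
qed

lemma admissible_fixB_count:
  assumes adm: "admissible fixB ws x"
  shows "length ws \<le> count_B ws (length ws) + 1"
proof -
  have fixB_window: "fixB \<in> {fixB..fixA}" using fixB_less_fixA by simp
  have "t \<le> count_B ws t + 1 \<and> (t = count_B ws t + 1 \<longrightarrow> fixB < word_orbit ws x t)"
    if "t \<le> length ws" for t
    using that
  proof (induction t)
    case (Suc t)
    let ?y = "word_orbit ws x t"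
    have y: "?y \<in> {fixB..A fixB}"
      using word_orbit_in_window[OF fixB_window adm, of t] Suc.prems fixB(2) by simp
    have allowed: "if ws ! t then fixB \<le> ?y else ?y \<le> fixB"
      using adm Suc.prems by (simp add: admissible_def)
    show ?case
    proof (cases "ws ! t")
      case False
      then have "?y = fixB" using y allowed by simp
      moreover have "fixB < A fixB" using A_above_diagonal fixB fixB_less_fixA by simp
      ultimately show ?thesis using Suc False count_B_le[of ws t] by auto
    next
      case True
      have "fixB < B ?y" if "fixB < ?y"
        using B_less[of fixB ?y] that y fixA fixB window_bounds[OF fixB_window] by auto
      then show ?thesis using Suc True by auto
    qed
  qed simp
  then show ?thesis by simp
qed

lemma word_orbit_in_01: "x \<in> {0..1} \<Longrightarrow> word_orbit ws x t \<in> {0..1}"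
  by (induction t) (simp_all add: A_in_01 B_in_01 del: atLeastAtMost_iff)

lemma continuous_on_word_orbit: "continuous_on {0..1} (\<lambda>x. word_orbit ws x t)"
proof (induction t)
  case (Suc t)
  have "continuous_on {0..1} (\<lambda>x. C (word_orbit ws x t))"
    if "continuous_on {0..1} C" for C :: "real \<Rightarrow> real"
    using word_orbit_in_01 by (intro continuous_on_compose2[OF that Suc.IH]) auto
  then show ?case using continuous_A continuous_B by (cases "ws ! t") simp_all
qed (simp add: continuous_on_id)

lemma closed_admissible: "closed {p \<in> {fixB..fixA} \<times> {0..1}. admissible (fst p) ws (snd p)}"
proof -
  define S where "S = {fixB..fixA} \<times> {0..1::real}"
  define C where "C t = {p \<in> S. if ws ! t then fst p \<le> word_orbit ws (snd p) t
                                  else word_orbit ws (snd p) t \<le> fst p}" for t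
  have "fst ` S \<subseteq> {0..1}" "snd ` S \<subseteq> {0..1}"
    using fixA(1) fixB(1) by (auto simp: S_def)
  then have cont: "continuous_on S (\<lambda>p. A (fst p))" "continuous_on S (\<lambda>p. B (fst p))"
    "continuous_on S (\<lambda>p. word_orbit ws (snd p) t)" for t
    by (auto intro!: continuous_on_compose2[OF continuous_A] continuous_on_compose2[OF continuous_B]
        continuous_on_compose2[OF continuous_on_word_orbit] continuous_intros)
  have closed_S: "closed S" by (simp add: S_def closed_Times)
  have "closed (C t)" for t
    using cont closed_S unfolding C_def
    by (cases "ws ! t") (simp_all add: continuous_on_closed_Collect_le continuous_on_fst continuous_on_id)
  moreover have "closed {p \<in> S. B (fst p) \<le> snd p}" "closed {p \<in> S. snd p \<le> A (fst p)}"
    using cont closed_S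
    by (simp_all add: continuous_on_closed_Collect_le continuous_on_snd continuous_on_id)
  ultimately have "closed ({p \<in> S. B (fst p) \<le> snd p} \<inter> {p \<in> S. snd p \<le> A (fst p)} \<inter> (\<Inter>t<length ws. C t))"
    by (intro closed_Int closed_INT) auto
  moreover have "{p \<in> S. admissible (fst p) ws (snd p)} =
      {p \<in> S. B (fst p) \<le> snd p} \<inter> {p \<in> S. snd p \<le> A (fst p)} \<inter> (\<Inter>t<length ws. C t)"
    by (auto simp: admissible_def C_def)
  ultimately show ?thesis by (simp add: S_def)
qed

lemma closed_admissible_parameters:
  "closed {s \<in> {fixB..fixA}. \<exists>ws x. length ws = n \<and> P ws \<and> admissible s ws x}"
proof -
  define K where "K ws = {p \<in> {fixB..fixA} \<times> {0..1}. admissible (fst p) ws (snd p)}" for ws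
  define W where "W = {ws. length ws = n \<and> P ws}"
  have "finite W"
    unfolding W_def by (rule finite_subset[OF _ finite_lists_length_eq[of "UNIV :: bool set" n]]) auto
  moreover have "closed (fst ` K ws)" for ws
  proof -
    have "bounded (K ws)"
      by (rule bounded_subset[of "{fixB..fixA} \<times> {0..1}"]) (auto simp: K_def intro: bounded_Times)
    then have "compact (K ws)"
      using closed_admissible by (simp add: compact_eq_bounded_closed K_def)
    then show ?thesis by (intro compact_imp_closed compact_continuous_image continuous_on_fst continuous_on_id)
  qed
  ultimately have "closed (\<Union>ws\<in>W. fst ` K ws)" by blast
  moreover have "x \<in> {0..1}" if "s \<in> {fixB..fixA}" "admissible s ws x" for s ws x
    using that window_bounds[OF that(1)] fixA(1) by (auto simp: admissible_def)
  then have "(\<Union>ws\<in>W. fst ` K ws) = {s \<in> {fixB..fixA}. \<exists>ws x. length ws = n \<and> P ws \<and> admissible s ws x}"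
    by (force simp: K_def W_def)
  ultimately show ?thesis by simp
qed

definition freq_at_least :: "real \<Rightarrow> real set" where
  "freq_at_least \<alpha> = {s \<in> {fixB..fixA}.
     \<forall>n\<ge>1. \<exists>ws x. length ws = n \<and> real n * \<alpha> \<le> real (count_B ws n) \<and> admissible s ws x}"

definition freq_at_most :: "real \<Rightarrow> real set" where
  "freq_at_most \<alpha> = {s \<in> {fixB..fixA}.
     \<forall>n\<ge>1. \<exists>ws x. length ws = n \<and> real (count_B ws n) \<le> real n * \<alpha> \<and> admissible s ws x}"

lemma closed_freq_at_least: "closed (freq_at_least \<alpha>)"
proof -
  have eq: "freq_at_least \<alpha> = {fixB..fixA} \<inter> (\<Inter>n\<in>{1..}. {s \<in> {fixB..fixA}.
      \<exists>ws x. length ws = n \<and> real n * \<alpha> \<le> real (count_B ws n) \<and> admissible s ws x})"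
    by (auto simp: freq_at_least_def)
  show ?thesis
    unfolding eq by (intro closed_Int closed_INT ballI closed_atLeastAtMost closed_admissible_parameters)
qed

lemma closed_freq_at_most: "closed (freq_at_most \<alpha>)"
proof -
  have eq: "freq_at_most \<alpha> = {fixB..fixA} \<inter> (\<Inter>n\<in>{1..}. {s \<in> {fixB..fixA}.
      \<exists>ws x. length ws = n \<and> real (count_B ws n) \<le> real n * \<alpha> \<and> admissible s ws x})"
    by (auto simp: freq_at_most_def)
  show ?thesis
    unfolding eq by (intro closed_Int closed_INT ballI closed_atLeastAtMost closed_admissible_parameters)
qed

primrec orbit :: "real \<Rightarrow> nat \<Rightarrow> real" where
  "orbit s 0 = s"
| "orbit s (Suc t) = (if s < orbit s t then B else A) (orbit s t)"

definition itinerary :: "real \<Rightarrow> nat \<Rightarrow> bool" where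
  "itinerary s t \<longleftrightarrow> s < orbit s t"

definition block_count :: "real \<Rightarrow> nat \<Rightarrow> nat \<Rightarrow> nat" where
  "block_count s k n = (\<Sum>t\<in>{k..<k + n}. of_bool (itinerary s t))"

lemma orbit_in_window: "s \<in> {fixB..fixA} \<Longrightarrow> orbit s t \<in> {B s..A s}"
proof (induction t)
  case 0
  then show ?case using window_bounds[of s] by simp
next
  case (Suc t)
  then show ?case using step_in_window[of s "orbit s t" "s < orbit s t"] by simp
qed

lemma word_orbit_block:
  "t \<le> n \<Longrightarrow> word_orbit (map (itinerary s) [k..<k + n]) (orbit s k) t = orbit s (k + t)"
  by (induction t) (simp_all add: itinerary_def)

lemma admissible_block:
  assumes "s \<in> {fixB..fixA}"
  shows "admissible s (map (itinerary s) [k..<k + n]) (orbit s k)"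
  using orbit_in_window[OF assms] by (auto simp: admissible_def word_orbit_block itinerary_def)

lemma count_B_block: "count_B (map (itinerary s) [k..<k + n]) n = block_count s k n"
  by (simp add: count_B_def block_count_def sum.atLeastLessThan_shift_0[of _ k] atLeast0LessThan add.commute)

text \<open>If every block of length \<open>n\<close> had fewer than \<open>n \<alpha>\<close> and every block of length \<open>m\<close> more than
  \<open>m \<alpha>\<close> letters \<open>B\<close>, the first \<open>m n\<close> steps of the orbit would contain both fewer and more
  than \<open>m n \<alpha>\<close> of them.\<close>
lemma freq_cover:
  assumes s: "s \<in> {fixB..fixA}"
  shows "s \<in> freq_at_least \<alpha> \<union> freq_at_most \<alpha>"
proof (rule ccontr)
  assume "s \<notin> freq_at_least \<alpha> \<union> freq_at_most \<alpha>"
  then obtain n m where "n \<ge> 1" "m \<ge> 1"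
    and n: "\<And>ws x. length ws = n \<Longrightarrow> admissible s ws x \<Longrightarrow> real (count_B ws n) < real n * \<alpha>"
    and m: "\<And>ws x. length ws = m \<Longrightarrow> admissible s ws x \<Longrightarrow> real m * \<alpha> < real (count_B ws m)"
    using s by (force simp: freq_at_least_def freq_at_most_def)
  define g :: "nat \<Rightarrow> nat" where "g t = of_bool (itinerary s t)" for t
  have block: "block_count s (i * l) l = sum g {i * l..<i * l + l}" for i l
    by (simp add: block_count_def g_def)
  have "real (sum g {..<m * n}) = (\<Sum>i<m. real (block_count s (i * n) n))"
    by (simp add: block sum.nat_group)
  also have "\<dots> < (\<Sum>i<m. real n * \<alpha>)"
    using n[OF _ admissible_block[OF s]] count_B_block \<open>m \<ge> 1\<close>
    by (intro sum_strict_mono) (auto simp: lessThan_empty_iff)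
  also have "\<dots> = (\<Sum>i<n. real m * \<alpha>)" by simp
  also have "\<dots> < (\<Sum>i<n. real (block_count s (i * m) m))"
    using m[OF _ admissible_block[OF s]] count_B_block \<open>n \<ge> 1\<close>
    by (intro sum_strict_mono) (auto simp: lessThan_empty_iff)
  also have "\<dots> = real (sum g {..<m * n})"
    by (simp add: block sum.nat_group mult.commute)
  finally show False by simp
qed

text \<open>Gluing the ends of the window \<open>[B s, A s]\<close> into a circle of length \<open>A s - B s\<close> turns the
  switched map into a circle map; \<open>lift s\<close> is a lift of it to the line, and the gap condition
  says that it has degree at most one.\<close>
definition lift :: "real \<Rightarrow> real \<Rightarrow> real" where
  "lift s x = (if x \<le> s then A x else B x + (A s - B s))"

context
  fixes s :: real
  assumes inside: "s \<in> {fixB<..<fixA}"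
begin

lemma window_inside: "s \<in> {fixB..fixA}" "B s < s" "s < A s"
  using inside A_above_diagonal[of s] B_below_diagonal[of s] fixB(1) by auto

lemma parameter_in_01: "s \<in> {0..1}"
  using window_inside(1) fixA(1) fixB(1) by auto

lemma window_in_01: "x \<in> {B s..A s} \<Longrightarrow> x \<in> {0..1}"
  using window_bounds[OF window_inside(1)] fixA(1) by auto

lemma lift_strict_mono:
  assumes x: "x \<in> {B s..A s}" and y: "y \<in> {B s..A s}" and "x < y"
  shows "lift s x < lift s y"
proof -
  have in_01: "x \<in> {0..1}" "y \<in> {0..1}" "s \<in> {0..1}"
    using x y window_in_01 window_inside by auto
  consider "y \<le> s" | "x \<le> s" "s < y" | "s < x" using \<open>x < y\<close> by linarith
  then show ?thesis
  proof cases
    case 2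
    then have "A x \<le> A s" "B s < B y" using in_01 A_mono B_less by auto
    then show ?thesis using 2 by (simp add: lift_def)
  qed (use in_01 \<open>x < y\<close> A_less B_less in \<open>auto simp: lift_def\<close>)
qed

lemma lift_mono: "x \<in> {B s..A s} \<Longrightarrow> y \<in> {B s..A s} \<Longrightarrow> x \<le> y \<Longrightarrow> lift s x \<le> lift s y"
  using lift_strict_mono[of x y] by (cases "x = y") auto

lemma lift_letter:
  assumes "x \<in> {B s..A s}" and "if c then s \<le> x else x \<le> s"
  shows "lift s x = (if c then B else A) x + of_bool c * (A s - B s)"
  using assms by (cases c; cases "x = s") (auto simp: lift_def)

lemma lift_gap: "lift s (A s) \<le> lift s (B s) + (A s - B s)"
  using gap[OF parameter_in_01] window_inside by (simp add: lift_def)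

lemma lift_le_shift:
  assumes x: "x \<in> {B s..A s}" and y: "y \<in> {B s..A s}"
  shows "lift s x \<le> lift s y + (A s - B s)"
proof -
  have "A s \<in> {B s..A s}" "B s \<in> {B s..A s}" using window_inside by auto
  then show ?thesis using lift_mono[OF x] lift_mono[OF _ y] lift_gap x y by fastforce
qed

lemma lift_less_shift:
  assumes x: "x \<in> {B s..A s}" and y: "y \<in> {B s..A s}" and "x < y + (A s - B s)"
  shows "lift s x < lift s y + (A s - B s)"
proof -
  have ends: "A s \<in> {B s..A s}" "B s \<in> {B s..A s}" using window_inside by auto
  show ?thesis
  proof (cases "x < A s")
    case True
    then have "lift s x < lift s (A s)" using lift_strict_mono[OF x ends(1)] by simp
    then show ?thesis using lift_le_shift[OF ends(1) y] by simp
  next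
    case False
    then have "x = A s" "B s < y" using x assms(3) by auto
    then show ?thesis using lift_gap lift_strict_mono[OF ends(2) y] by simp
  qed
qed

lemma lift_shift_less:
  fixes j :: int
  assumes x: "x \<in> {B s..A s}" and y: "y \<in> {B s..A s}" and less: "x < y + j * (A s - B s)"
  shows "lift s x < lift s y + j * (A s - B s)"
proof -
  define l where "l = A s - B s"
  have "0 < l" using window_inside by (simp add: l_def)
  consider "j < 0" | "j = 0" | "j = 1" | "j \<ge> 2" by linarith
  then show ?thesis
  proof cases
    case 1
    then have "real_of_int j \<le> -1" by simp
    then have "j * l \<le> -1 * l" using \<open>0 < l\<close> by (intro mult_right_mono) auto
    then show ?thesis using less x y by (simp add: l_def)
  next
    case 2
    then show ?thesis using lift_strict_mono[OF x y] less by simp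
  next
    case 3
    then show ?thesis using lift_less_shift[OF x y] less by simp
  next
    case 4
    have "lift s x \<le> lift s y + l" using lift_le_shift[OF x y] by (simp add: l_def)
    moreover have "l < j * l" using 4 \<open>0 < l\<close> by simp
    ultimately show ?thesis by (simp add: l_def)
  qed
qed

lemma count_B_interlace:
  assumes ws: "admissible s ws x" "length ws = n" and vs: "admissible s vs y" "length vs = n"
  shows "count_B ws n \<le> count_B vs n + 2"
proof -
  define l where "l = A s - B s"
  define X where "X t = word_orbit ws x t + count_B ws t * l" for t
  define Y where "Y t = word_orbit vs y t + (count_B vs t + 2) * l" for t
  have window: "word_orbit ws x t \<in> {B s..A s}" "word_orbit vs y t \<in> {B s..A s}" if "t \<le> n" for t
    using word_orbit_in_window[OF window_inside(1)] ws vs that by auto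
  have "X t < Y t" if "t \<le> n" for t
    using that
  proof (induction t)
    case 0
    then show ?case using ws(1) vs(1) window_inside by (auto simp: X_def Y_def l_def admissible_def)
  next
    case (Suc t)
    define j :: int where "j = int (count_B vs t) + 2 - int (count_B ws t)"
    have "word_orbit ws x t < word_orbit vs y t + j * l"
      using Suc by (simp add: X_def Y_def j_def algebra_simps)
    then have "lift s (word_orbit ws x t) < lift s (word_orbit vs y t) + j * l"
      using lift_shift_less window Suc.prems unfolding l_def by simp
    moreover have "lift s (word_orbit ws x t) = word_orbit ws x (Suc t) + of_bool (ws ! t) * l"
      "lift s (word_orbit vs y t) = word_orbit vs y (Suc t) + of_bool (vs ! t) * l"
      using lift_letter window ws vs Suc.prems by (auto simp: admissible_def l_def)
    ultimately show ?case by (simp add: X_def Y_def j_def algebra_simps)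
  qed
  then have "X n < Y n" by simp
  moreover have "B s \<le> word_orbit ws x n" "word_orbit vs y n \<le> A s" using window by auto
  ultimately have "count_B ws n * l < (count_B vs n + 3) * l"
    by (simp add: X_def Y_def l_def algebra_simps)
  then show ?thesis using window_inside by (simp add: l_def mult_less_cancel_right)
qed

lemma block_count_near_frequency:
  assumes "s \<in> freq_at_least \<alpha> \<inter> freq_at_most \<alpha>" "n \<ge> 1"
  shows "\<bar>real (block_count s k n) - n * \<alpha>\<bar> \<le> 2"
proof -
  have "\<exists>ws x. length ws = n \<and> real n * \<alpha> \<le> real (count_B ws n) \<and> admissible s ws x"
    "\<exists>vs y. length vs = n \<and> real (count_B vs n) \<le> real n * \<alpha> \<and> admissible s vs y"
    using assms by (auto simp: freq_at_least_def freq_at_most_def)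
  then obtain ws x vs y where ws: "length ws = n" "real n * \<alpha> \<le> real (count_B ws n)" "admissible s ws x"
    and vs: "length vs = n" "real (count_B vs n) \<le> real n * \<alpha>" "admissible s vs y"
    by blast
  note block = admissible_block[OF window_inside(1), of k n]
  have "count_B ws n \<le> block_count s k n + 2" "block_count s k n \<le> count_B vs n + 2"
    using count_B_interlace[OF ws(3,1) block] count_B_interlace[OF block _ vs(3,1)]
    by (simp_all add: count_B_block)
  then show ?thesis using ws(2) vs(2) by linarith
qed

end

text \<open>Since \<open>1/3 < \<alpha> < 1/2\<close>, words of length 3 and 2 exclude \<open>fixA\<close> from \<open>freq_at_least \<alpha>\<close> and
  \<open>fixB\<close> from \<open>freq_at_most \<alpha>\<close>. Both sets are closed and together cover \<open>[fixB, fixA]\<close>, so by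
  connectedness they meet.\<close>
lemma exists_balanced_parameter:
  assumes "1/3 < \<alpha>" "\<alpha> < 1/2"
  shows "\<exists>s\<in>{fixB<..<fixA}. s \<in> freq_at_least \<alpha> \<inter> freq_at_most \<alpha>"
proof -
  have "fixA \<notin> freq_at_least \<alpha>"
  proof
    assume "fixA \<in> freq_at_least \<alpha>"
    then obtain ws x where "length ws = 3" "3 * \<alpha> \<le> real (count_B ws 3)" "admissible fixA ws x"
      unfolding freq_at_least_def by (auto dest!: spec[of _ 3])
    then show False using admissible_fixA_count assms(1) by fastforce
  qed
  moreover have "fixB \<notin> freq_at_most \<alpha>"
  proof
    assume "fixB \<in> freq_at_most \<alpha>"
    then obtain ws x where "length ws = 2" "real (count_B ws 2) \<le> 2 * \<alpha>" "admissible fixB ws x"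
      unfolding freq_at_most_def by (auto dest!: spec[of _ 2])
    then show False using admissible_fixB_count assms(2) by fastforce
  qed
  moreover have cover: "{fixB..fixA} \<subseteq> freq_at_least \<alpha> \<union> freq_at_most \<alpha>"
    using freq_cover by blast
  moreover have "fixB \<in> {fixB..fixA}" "fixA \<in> {fixB..fixA}" using fixB_less_fixA by auto
  ultimately have "fixB \<in> freq_at_least \<alpha> \<inter> {fixB..fixA}" "fixA \<in> freq_at_most \<alpha> \<inter> {fixB..fixA}"
    by blast+
  then obtain s where s: "s \<in> {fixB..fixA}" "s \<in> freq_at_least \<alpha> \<inter> freq_at_most \<alpha>"
    using connected_closedD[OF connected_Icc _ cover closed_freq_at_least closed_freq_at_most] by blast
  then have "s \<noteq> fixA" "s \<noteq> fixB" using \<open>fixA \<notin> _\<close> \<open>fixB \<notin> _\<close> by auto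
  then show ?thesis using s by auto
qed

text \<open>The itinerary of a balanced parameter has the irrational frequency \<open>\<alpha>\<close> of letters \<open>B\<close> up to a
  bounded error on every block, whereas an eventually periodic word has a rational frequency.\<close>
theorem exists_aperiodic_itinerary:
  "\<exists>s\<in>{0<..<1}. \<exists>x w. (\<forall>t. x t \<in> {0..1}) \<and> (\<forall>t. x (Suc t) = (if w t then B else A) (x t)) \<and>
     (\<forall>t. if w t then s \<le> x t else x t \<le> s) \<and> (\<forall>q\<ge>1. \<nexists>N. \<forall>n\<ge>N. w (n + q) = w n)"
proof -
  obtain \<alpha> :: real where \<alpha>: "\<alpha> \<in> {1/3<..<1/2}" "\<alpha> \<notin> \<rat>"
    using exists_irrational_between[of "1/3" "1/2"] by auto
  then have "\<exists>s\<in>{fixB<..<fixA}. s \<in> freq_at_least \<alpha> \<inter> freq_at_most \<alpha>"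
    by (intro exists_balanced_parameter) auto
  then obtain s where s: "s \<in> {fixB<..<fixA}" "s \<in> freq_at_least \<alpha> \<inter> freq_at_most \<alpha>"
    by blast
  have aperiodic: "\<nexists>N. \<forall>n\<ge>N. itinerary s (n + q) = itinerary s n" if "q \<ge> 1" for q
  proof
    assume "\<exists>N. \<forall>n\<ge>N. itinerary s (n + q) = itinerary s n"
    then obtain N where "\<forall>n\<ge>N. itinerary s (n + q) = itinerary s n" by blast
    then have "block_count s N (m * q) = m * block_count s N q" for m
      unfolding block_count_def by (rule periodic_block_sum)
    then have "\<bar>real m * (real (block_count s N q) - q * \<alpha>)\<bar> \<le> 2" if "m \<ge> 1" for m
      using block_count_near_frequency[OF s, of "m * q" N] that \<open>q \<ge> 1\<close>
      by (simp add: algebra_simps)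
    then have "real (block_count s N q) - q * \<alpha> = 0"
      by (rule multiples_bounded_imp_zero)
    then have "\<alpha> = of_nat (block_count s N q) / of_nat q"
      using \<open>q \<ge> 1\<close> by (simp add: field_simps)
    then show False using \<alpha>(2) by simp
  qed
  have "orbit s t \<in> {0..1}" for t
    using orbit_in_window window_in_01 s(1) window_inside(1) by blast
  moreover have "0 < s" "s < 1" using s(1) fixB(1) fixA(1) by auto
  moreover have "if itinerary s t then s \<le> orbit s t else orbit s t \<le> s" for t
    by (simp add: itinerary_def)
  ultimately show ?thesis
    using aperiodic by (intro bexI[of _ s] exI[of _ "orbit s"] exI[of _ "itinerary s"])
      (simp_all add: itinerary_def)
qed

end

lemma gap_maps_cong:
  assumes "gap_maps A B" and A': "\<And>x. x \<in> {0..1} \<Longrightarrow> A' x = A x" and B': "\<And>x. x \<in> {0..1} \<Longrightarrow> B' x = B x"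
  shows "gap_maps A' B'"
proof -
  interpret gap_maps A B by fact
  show ?thesis
  proof
    show "continuous_on {0..1} A'"
      using continuous_on_cong[of "{0..1}" "{0..1}" A' A] A' continuous_A by simp
    show "continuous_on {0..1} B'"
      using continuous_on_cong[of "{0..1}" "{0..1}" B' B] B' continuous_B by simp
    show "strict_mono_on {0..1} A'" "strict_mono_on {0..1} B'"
      using strict_mono_onD[OF strict_mono_A] strict_mono_onD[OF strict_mono_B] A' B'
      by (auto intro!: strict_mono_onI)
    show "0 < A' 0" "A' 1 = 1" "B' 0 = 0" "B' 1 \<le> 1" using A_0 A_1 B_0 B_1 A' B' by auto
    show "y < A' y \<or> B' y < y" if "y \<in> {0..1}" for y using no_common_fixpoint[OF that] that A' B' by simp
    show "B' (A' s) \<le> A' (B' s)" if "s \<in> {0..1}" for s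
      using gap[OF that] that A_in_01 B_in_01 A' B' by simp
  qed
qed

section \<open>Linear fractional maps\<close>

definition linfrac :: "real \<Rightarrow> real \<Rightarrow> real \<Rightarrow> real" where
  "linfrac a b x = x / (a + b * x)"

lemma linfrac_0 [simp]: "linfrac a b 0 = 0"
  by (simp add: linfrac_def)

lemma linfrac_divide:
  assumes "D \<noteq> 0"
  shows "linfrac a b (x / D) = x / (a * D + b * x)"
proof -
  have "a + b * (x / D) = (a * D + b * x) / D"
    using assms by (simp add: field_simps)
  then show ?thesis using assms by (simp add: linfrac_def divide_divide_times_eq)
qed

lemma linfrac_comp:
  assumes "a' + b' * x \<noteq> 0"
  shows "linfrac a b (linfrac a' b' x) = linfrac (a * a') (a * b' + b) x"
  using linfrac_divide[OF assms, of a b x] by (simp add: linfrac_def algebra_simps)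

lemma le_linfrac_iff:
  assumes "0 < a + b * x" "0 < x"
  shows "x \<le> linfrac a b x \<longleftrightarrow> a + b * x \<le> 1"
  using assms by (simp add: linfrac_def le_divide_eq)

lemma affine_pos_on_01:
  fixes a b x :: real
  assumes "0 < a" "0 < a + b" "x \<in> {0..1}"
  shows "0 < a + b * x"
proof -
  have "a + b * x = a * (1 - x) + (a + b) * x" by algebra
  moreover have "0 \<le> a * (1 - x)" "0 \<le> (a + b) * x" using assms by auto
  moreover have "0 < a * (1 - x) \<or> 0 < (a + b) * x" using assms by (cases "x = 1") auto
  ultimately show ?thesis by linarith
qed

context
  fixes a b :: real
  assumes a: "0 < a" and ab: "1 < a + b"
begin

lemma linfrac_denominator_pos: "x \<in> {0..1} \<Longrightarrow> 0 < a + b * x"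
  using affine_pos_on_01 a ab by simp

lemma continuous_on_linfrac: "continuous_on {0..1} (linfrac a b)"
  unfolding linfrac_def using linfrac_denominator_pos
  by (intro continuous_intros) (auto simp: less_le)

lemma strict_mono_on_linfrac: "strict_mono_on {0..1} (linfrac a b)"
proof (rule strict_mono_onI)
  fix x y :: real assume "x \<in> {0..1}" "y \<in> {0..1}" "x < y"
  moreover from this have "0 < a + b * x" "0 < a + b * y" using linfrac_denominator_pos by auto
  ultimately show "linfrac a b x < linfrac a b y"
    using a by (simp add: linfrac_def field_simps)
qed

lemma linfrac_in_01: "x \<in> {0..1} \<Longrightarrow> linfrac a b x \<in> {0..1}"
proof -
  assume x: "x \<in> {0..1}"
  have "0 \<le> a * (1 - x)" "0 \<le> (a + b - 1) * x" using a ab x by auto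
  then have "x \<le> a + b * x" by (simp add: algebra_simps)
  then show ?thesis using linfrac_denominator_pos[OF x] x by (simp add: linfrac_def)
qed

lemma linfrac_1_less: "linfrac a b 1 < 1"
  using ab by (simp add: linfrac_def)

lemma linfrac_pos: "0 < x \<Longrightarrow> x \<le> 1 \<Longrightarrow> 0 < linfrac a b x"
  using linfrac_denominator_pos[of x] by (simp add: linfrac_def)

end

context
  fixes c d e f :: real
  assumes c: "0 < c" and cd: "1 < c + d" and e: "0 < e" and ef: "1 < e + f"
    and product: "1 \<le> (c + d - 1) * (e + f - 1)"
begin

lemma linfrac_no_common_fixpoint:
  assumes y: "y \<in> {0..1}"
  shows "y < 1 - linfrac c d (1 - y) \<or> linfrac e f y < y"
proof (rule ccontr)
  assume "\<not> ?thesis"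
  then have A: "1 - y \<le> linfrac c d (1 - y)" and B: "y \<le> linfrac e f y" by auto
  have "y \<noteq> 0" "y \<noteq> 1" using A B linfrac_1_less[OF c cd] linfrac_1_less[OF e ef] by auto
  then have u: "0 < 1 - y" and y': "0 < y" using y by auto
  have "c + d * (1 - y) \<le> 1" "e + f * y \<le> 1"
    using A B le_linfrac_iff linfrac_denominator_pos[OF c cd] linfrac_denominator_pos[OF e ef] u y' y
    by auto
  then have Cu: "(c + d - 1) * (1 - y) \<le> (1 - c) * y" and Ey: "(e + f - 1) * y \<le> (1 - e) * (1 - y)"
    by (simp_all add: algebra_simps)
  have "0 < (c + d - 1) * (1 - y)" "0 < (e + f - 1) * y" using cd ef u y' by auto
  then have "0 < (1 - c) * y" "0 < (1 - e) * (1 - y)" using Cu Ey by linarith+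
  then have "c < 1" "e < 1" using u y' by (simp_all add: zero_less_mult_iff)
  have "((c + d - 1) * (1 - y)) * ((e + f - 1) * y) \<le> ((1 - c) * y) * ((1 - e) * (1 - y))"
    using \<open>0 < (1 - c) * y\<close> \<open>0 < (e + f - 1) * y\<close> by (intro mult_mono[OF Cu Ey]) auto
  then have "((c + d - 1) * (e + f - 1)) * ((1 - y) * y) \<le> ((1 - c) * (1 - e)) * ((1 - y) * y)"
    by (simp add: mult_ac)
  then have "(c + d - 1) * (e + f - 1) \<le> (1 - c) * (1 - e)" using u y' by simp
  moreover have "(1 - c) * (1 - e) < 1 * 1"
    using c e \<open>c < 1\<close> \<open>e < 1\<close> by (intro mult_strict_mono) auto
  ultimately show False using product by simp
qed

text \<open>After clearing the positive denominators, the difference of the two sides is a sum of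
  nonnegative terms (\<open>expand\<close>); the hypothesis \<open>product\<close> is needed for the first of them.\<close>
lemma linfrac_gap:
  assumes s: "s \<in> {0..1}"
  shows "linfrac e f (1 - linfrac c d (1 - s)) \<le> 1 - linfrac c d (1 - linfrac e f s)"
proof -
  define u where "u = 1 - s"
  define D1 where "D1 = e + f * s"
  define D2 where "D2 = c + d * u"
  define X where "X = D1 - s"
  define Y where "Y = D2 - u"
  have u: "u \<in> {0..1}" using s by (simp add: u_def)
  have D: "0 < D1" "0 < D2"
    using linfrac_denominator_pos[OF e ef s] linfrac_denominator_pos[OF c cd u] by (simp_all add: D1_def D2_def)
  have "0 \<le> e * (1 - s)" "0 \<le> (e + f - 1) * s" "0 \<le> c * (1 - u)" "0 \<le> (c + d - 1) * u"
    using s u c cd e ef by auto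
  then have XY: "0 \<le> X" "0 \<le> Y" by (simp_all add: X_def Y_def D1_def D2_def algebra_simps)
  have As: "1 - linfrac c d (1 - s) = Y / D2" and Bs: "1 - linfrac e f s = X / D1"
    using D by (simp_all add: linfrac_def u_def Y_def X_def D1_def D2_def field_simps)
  have in_01: "Y / D2 \<in> {0..1}" "X / D1 \<in> {0..1}"
    using linfrac_in_01[OF c cd u] linfrac_in_01[OF e ef s] As Bs by (auto simp: u_def)
  have "0 < e + f * (Y / D2)" "0 < c + d * (X / D1)"
    by (fact linfrac_denominator_pos[OF e ef in_01(1)], fact linfrac_denominator_pos[OF c cd in_01(2)])
  then have den: "0 < e * D2 + f * Y" "0 < c * D1 + d * X"
    using D by (simp_all add: field_simps)
  have "Y * (c * D1 + d * X) \<le> (c * D1 + (d - 1) * X) * (e * D2 + f * Y)"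
  proof -
    have expand: "(c * D1 + (d - 1) * X) * (e * D2 + f * Y) - Y * (c * D1 + d * X) =
      X * Y * ((c + d - 1) * (e + f - 1) - 1) + (c + d - 1) * e * u * X + c * s * Y * (e + f - 1)
        + c * s * e * u"
      by (simp add: X_def Y_def D1_def D2_def u_def algebra_simps)
    have "0 \<le> X * Y * ((c + d - 1) * (e + f - 1) - 1)" using XY product by simp
    moreover have "0 \<le> (c + d - 1) * e * u * X" using cd e u XY by simp
    moreover have "0 \<le> c * s * Y * (e + f - 1)" using c s XY ef by simp
    moreover have "0 \<le> c * s * e * u" using c s e u by simp
    ultimately show ?thesis using expand by linarith
  qed
  then have "Y / (e * D2 + f * Y) \<le> 1 - X / (c * D1 + d * X)"
    using den by (simp add: field_simps)
  moreover have "linfrac e f (1 - linfrac c d (1 - s)) = Y / (e * D2 + f * Y)"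
    unfolding As using D by (simp add: linfrac_divide)
  moreover have "1 - linfrac c d (1 - linfrac e f s) = 1 - X / (c * D1 + d * X)"
    unfolding Bs using D by (simp add: linfrac_divide)
  ultimately show ?thesis by simp
qed

lemma gap_maps_linfrac: "gap_maps (\<lambda>x. 1 - linfrac c d (1 - x)) (linfrac e f)"
proof
  have "(\<lambda>x. 1 - x) ` {0..1} \<subseteq> {0..1::real}" by auto
  then show "continuous_on {0..1} (\<lambda>x. 1 - linfrac c d (1 - x))"
    by (intro continuous_intros continuous_on_compose2[OF continuous_on_linfrac[OF c cd]]) auto
  show "strict_mono_on {0..1} (\<lambda>x. 1 - linfrac c d (1 - x))"
    using strict_mono_onD[OF strict_mono_on_linfrac[OF c cd]] by (intro strict_mono_onI) auto
  show "0 < 1 - linfrac c d (1 - 0)" using linfrac_1_less[OF c cd] by simp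
  show "1 - linfrac c d (1 - 1) = 1" by simp
  show "continuous_on {0..1} (linfrac e f)" by (rule continuous_on_linfrac[OF e ef])
  show "strict_mono_on {0..1} (linfrac e f)" by (rule strict_mono_on_linfrac[OF e ef])
  show "linfrac e f 0 = 0" by simp
  show "linfrac e f 1 \<le> 1" using linfrac_1_less[OF e ef] by simp
  show "y < 1 - linfrac c d (1 - y) \<or> linfrac e f y < y" if "y \<in> {0..1}" for y
    using linfrac_no_common_fixpoint[OF that] .
  show "linfrac e f (1 - linfrac c d (1 - s)) \<le> 1 - linfrac c d (1 - linfrac e f s)"
    if "s \<in> {0..1}" for s
    using linfrac_gap[OF that] .
qed

end

section \<open>The triangle process\<close>

lemma nxt_simps [simp]: "nxt (Suc 0) = 2" "nxt 2 = 3" "nxt 3 = 1"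
  by (simp_all add: nxt_def)

lemma side_cases [consumes 1, case_names 1 2 3]:
  "j \<in> {1,2,3} \<Longrightarrow> (j = 1 \<Longrightarrow> P) \<Longrightarrow> (j = 2 \<Longrightarrow> P) \<Longrightarrow> (j = 3 \<Longrightarrow> P) \<Longrightarrow> P"
  by blast

lemma nxt_cycle:
  assumes "j \<in> {1,2,3}"
  shows "nxt j \<in> {1,2,3} \<and> nxt (nxt j) \<in> {1,2,3} \<and> nxt j \<noteq> j \<and> nxt (nxt j) \<noteq> j \<and>
    nxt (nxt j) \<noteq> nxt j \<and> {1,2,3} = {j, nxt j, nxt (nxt j)}"
  using assms by (cases rule: side_cases) (simp_all add: insert_commute)

lemma pt_sum:
  assumes "i \<in> {1,2,3}"
  shows "pt (x, i) 1 + pt (x, i) 2 + pt (x, i) 3 = 1"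
  using assms by (cases rule: side_cases) (simp_all add: pt_def)

lemma pt_in_01: "x \<in> {0..1} \<Longrightarrow> pt (x, i) l \<in> {0..1}"
  by (simp add: pt_def)

lemma nonperiodic_of_side_pattern:
  assumes even: "\<And>k. side (z (2 * k)) = 1"
    and odd: "\<And>k. side (z (2 * k + 1)) = (if w k then 3 else 2)"
    and aperiodic: "\<And>q. q \<ge> 1 \<Longrightarrow> \<nexists>N. \<forall>n\<ge>N. w (n + q) = w n"
  shows "nonperiodic z"
  unfolding nonperiodic_def eventually_periodic_def
proof (intro allI impI notI)
  fix m :: nat
  assume "1 \<le> m" and "\<exists>N. \<forall>n\<ge>N. side (z (n + m)) = side (z n)"
  then obtain N where N: "\<And>n. n \<ge> N \<Longrightarrow> side (z (n + m)) = side (z n)" by blast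
  show False
  proof (cases "even m")
    case False
    then obtain j where "m = 2 * j + 1" by (blast elim: oddE)
    then have "side (z (2 * (N + j) + 1)) = side (z (2 * N))"
      using N[of "2 * N"] by (simp add: algebra_simps)
    then show False using even[of N] odd[of "N + j"] by (simp split: if_splits)
  next
    case True
    then obtain q where q: "m = 2 * q" by blast
    have "w (n + q) = w n" if "n \<ge> N" for n
    proof -
      have "side (z (2 * (n + q) + 1)) = side (z (2 * n + 1))"
        using N[of "2 * n + 1"] that q by (simp add: algebra_simps)
      then show ?thesis using odd[of "n + q"] odd[of n] by (simp split: if_splits)
    qed
    then show False using aperiodic[of q] q \<open>1 \<le> m\<close> by auto
  qed
qed

locale triangle_rates =
  fixes lam mu :: "nat \<Rightarrow> real"
  assumes lam_pos: "\<And>i. i \<in> {1,2,3} \<Longrightarrow> 0 < lam i"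
    and lam_less_mu: "\<And>i. i \<in> {1,2,3} \<Longrightarrow> lam i < mu i"
begin

definition lam_sum :: real where
  "lam_sum = lam 1 + lam 2 + lam 3"

lemma mu_theta: "j \<in> {1,2,3} \<Longrightarrow> mu j * theta lam mu j = lam_sum - mu j"
  using lam_pos[of j] lam_less_mu[of j] by (simp add: theta_def lam_sum_def field_simps)

lemma fmap_denominator_pos:
  assumes "j \<in> {1,2,3}" "t \<in> {0..1}"
  shows "0 < (mu j - lam j) + mu j * theta lam mu j * t"
proof -
  have "0 < lam_sum - lam j"
    using assms(1) lam_pos[of 1] lam_pos[of 2] lam_pos[of 3] by (auto simp: lam_sum_def)
  then show ?thesis
    using affine_pos_on_01[of "mu j - lam j" "lam_sum - mu j" t] lam_less_mu assms
    by (simp add: mu_theta)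
qed

definition den_const :: "nat \<Rightarrow> nat \<Rightarrow> real" where
  "den_const j i = (mu j - lam j) / lam i"

definition den_slope :: "nat \<Rightarrow> nat \<Rightarrow> real" where
  "den_slope j i = (lam_sum - mu j) / lam i"

lemma fmap_coordinate_linfrac:
  assumes "i \<in> {1,2,3}" "j \<in> {1,2,3}" "i \<noteq> j" "z i = 0"
  shows "fmap lam mu j z i = linfrac (den_const j i) (den_slope j i) (z j)"
proof -
  define D where "D = (mu j - lam j) + (lam_sum - mu j) * z j"
  have "lam i \<noteq> 0" using lam_pos assms(1) by fastforce
  then have "den_const j i + den_slope j i * z j = D / lam i"
    by (simp add: den_const_def den_slope_def D_def field_simps)
  then have "linfrac (den_const j i) (den_slope j i) (z j) = lam i * z j / D"
    by (simp add: linfrac_def)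
  moreover have "fmap lam mu j z i = lam i * z j / D"
    using assms by (simp add: fmap_def mu_theta D_def)
  ultimately show ?thesis by simp
qed

lemma fmap_coordinates_sum:
  assumes j: "j \<in> {1,2,3}" and z: "z 1 + z 2 + z 3 = 1"
    and den: "(mu j - lam j) + mu j * theta lam mu j * z j \<noteq> 0"
  shows "fmap lam mu j z (nxt j) + fmap lam mu j z (nxt (nxt j)) = 1"
proof -
  define D where "D = (mu j - lam j) + mu j * theta lam mu j * z j"
  have "fmap lam mu j z (nxt j) + fmap lam mu j z (nxt (nxt j)) =
      ((mu j - lam j) * (z (nxt j) + z (nxt (nxt j))) + (lam (nxt j) + lam (nxt (nxt j))) * z j) / D"
    using nxt_cycle[OF j] by (simp add: fmap_def D_def add_divide_distrib[symmetric] algebra_simps)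
  also have "z (nxt j) + z (nxt (nxt j)) = 1 - z j"
    using j z by (cases rule: side_cases) (simp_all add: algebra_simps)
  also have "lam (nxt j) + lam (nxt (nxt j)) = lam_sum - lam j"
    using j by (cases rule: side_cases) (simp_all add: lam_sum_def)
  also have "((mu j - lam j) * (1 - z j) + (lam_sum - lam j) * z j) / D = 1"
    using den unfolding D_def mu_theta[OF j] by (simp add: algebra_simps)
  finally show ?thesis .
qed

definition next_point :: "nat \<Rightarrow> real \<times> nat \<Rightarrow> real \<times> nat" where
  "next_point j p = (fmap lam mu j (pt p) (nxt (nxt j)), j)"

lemma pt_next_point:
  assumes i: "i \<in> {1,2,3}" and j: "j \<in> {1,2,3}" and x: "x \<in> {0..1}"
  shows "pt (next_point j (x, i)) = fmap lam mu j (pt (x, i))"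
proof
  fix l
  let ?z = "pt (x, i)"
  have "0 < (mu j - lam j) + mu j * theta lam mu j * ?z j"
    using fmap_denominator_pos[OF j pt_in_01[OF x]] .
  then have "fmap lam mu j ?z (nxt j) = 1 - fmap lam mu j ?z (nxt (nxt j))"
    using fmap_coordinates_sum[where z = "pt (x, i)", OF j pt_sum[OF i]] by (simp add: eq_diff_eq)
  moreover have "fmap lam mu j ?z l = 0" if "l \<noteq> nxt j" "l \<noteq> nxt (nxt j)"
    using that nxt_cycle[OF j] by (auto simp: fmap_def)
  ultimately show "pt (next_point j (x, i)) l = fmap lam mu j ?z l"
    using nxt_cycle[OF j] by (auto simp: next_point_def pt_def)
qed

lemma fst_next_point_complement:
  assumes "i \<in> {1,2,3}" "j \<in> {1,2,3}" "x \<in> {0..1}"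
  shows "fst (next_point j (x, i)) = 1 - fmap lam mu j (pt (x, i)) (nxt j)"
proof -
  have "pt (next_point j (x, i)) (nxt j) = 1 - fst (next_point j (x, i))"
    by (simp add: next_point_def pt_def)
  then show ?thesis using pt_next_point[OF assms] by simp
qed

lemma den_const_pos: "i \<in> {1,2,3} \<Longrightarrow> j \<in> {1,2,3} \<Longrightarrow> 0 < den_const j i"
  using lam_pos lam_less_mu by (simp add: den_const_def)

lemma den_sum_gt_1:
  assumes "i \<in> {1,2,3}" "j \<in> {1,2,3}" "i \<noteq> j"
  shows "1 < den_const j i + den_slope j i"
proof -
  have "lam i < lam_sum - lam j"
    using assms lam_pos[of 1] lam_pos[of 2] lam_pos[of 3] by (auto simp: lam_sum_def)
  then show ?thesis using lam_pos[OF assms(1)] by (simp add: den_const_def den_slope_def field_simps)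
qed

lemma coeffs_from_side_1:
  "0 < den_const 2 1" "1 < den_const 2 1 + den_slope 2 1"
  "0 < den_const 3 1" "1 < den_const 3 1 + den_slope 3 1"
  by (simp_all add: den_const_pos den_sum_gt_1)

lemma snd_next_point [simp]: "snd (next_point j p) = j"
  by (simp add: next_point_def)

lemma next_point_1_to_2:
  "next_point 2 (x, 1) = (linfrac (den_const 2 1) (den_slope 2 1) (1 - x), 2)"
  using fmap_coordinate_linfrac[of 1 2 "pt (x, 1)"] by (simp add: next_point_def pt_def)

lemma next_point_1_to_3:
  assumes "x \<in> {0..1}"
  shows "next_point 3 (x, 1) = (1 - linfrac (den_const 3 1) (den_slope 3 1) x, 3)"
  using fst_next_point_complement[of 1 3 x] fmap_coordinate_linfrac[of 1 3 "pt (x, 1)"] assms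
  by (intro prod_eqI) (simp_all add: pt_def)

lemma next_point_2_to_1:
  assumes "x \<in> {0..1}"
  shows "next_point 1 (x, 2) = (1 - linfrac (den_const 1 2) (den_slope 1 2) x, 1)"
  using fst_next_point_complement[of 2 1 x] fmap_coordinate_linfrac[of 2 1 "pt (x, 2)"] assms
  by (intro prod_eqI) (simp_all add: pt_def)

lemma next_point_3_to_1:
  "next_point 1 (x, 3) = (linfrac (den_const 1 3) (den_slope 1 3) (1 - x), 1)"
  using fmap_coordinate_linfrac[of 3 1 "pt (x, 3)"] by (simp add: next_point_def pt_def)

definition return_map :: "bool \<Rightarrow> real \<Rightarrow> real" where
  "return_map b x = fst (next_point 1 (next_point (if b then 3 else 2) (x, 1)))"

lemma return_map_linfrac:
  assumes x: "x \<in> {0..1}"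
  shows "return_map False x =
      1 - linfrac (den_const 1 2 * den_const 2 1) (den_const 1 2 * den_slope 2 1 + den_slope 1 2) (1 - x)"
    and "return_map True x =
      linfrac (den_const 1 3 * den_const 3 1) (den_const 1 3 * den_slope 3 1 + den_slope 1 3) x"
proof -
  note p21 = coeffs_from_side_1(1,2) and p31 = coeffs_from_side_1(3,4)
  have "1 - x \<in> {0..1}" using x by simp
  then have "0 < den_const 2 1 + den_slope 2 1 * (1 - x)"
    and v: "linfrac (den_const 2 1) (den_slope 2 1) (1 - x) \<in> {0..1}"
    by (fact linfrac_denominator_pos[OF p21], fact linfrac_in_01[OF p21])
  then show "return_map False x =
      1 - linfrac (den_const 1 2 * den_const 2 1) (den_const 1 2 * den_slope 2 1 + den_slope 1 2) (1 - x)"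
    unfolding return_map_def if_False next_point_1_to_2 next_point_2_to_1[OF v] by (simp add: linfrac_comp)
  have "den_const 3 1 + den_slope 3 1 * x \<noteq> 0"
    using linfrac_denominator_pos[OF p31 x] by simp
  then show "return_map True x =
      linfrac (den_const 1 3 * den_const 3 1) (den_const 1 3 * den_slope 3 1 + den_slope 1 3) x"
    unfolding return_map_def if_True next_point_1_to_3[OF x] next_point_3_to_1 by (simp add: linfrac_comp)
qed

lemma gap_maps_return_map: "gap_maps (return_map False) (return_map True)"
proof -
  define c where "c = den_const 1 2 * den_const 2 1"
  define d where "d = den_const 1 2 * den_slope 2 1 + den_slope 1 2"
  define e where "e = den_const 1 3 * den_const 3 1"
  define f where "f = den_const 1 3 * den_slope 3 1 + den_slope 1 3"
  have lam: "0 < lam 1" "0 < lam 2" "0 < lam 3" "lam 1 < mu 1" "0 < mu 1"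
    using lam_pos[of 1] lam_pos[of 2] lam_pos[of 3] lam_less_mu[of 1] by auto
  have ce: "0 < c" "0 < e" using den_const_pos by (simp_all add: c_def e_def)
  have cd: "c + d - 1 = mu 1 * lam 3 / (lam 1 * lam 2)"
    using lam by (simp add: c_def d_def den_const_def den_slope_def lam_sum_def field_simps)
  have ef: "e + f - 1 = mu 1 * lam 2 / (lam 1 * lam 3)"
    using lam by (simp add: e_def f_def den_const_def den_slope_def lam_sum_def field_simps)
  have "(c + d - 1) * (e + f - 1) = (mu 1 / lam 1) * (mu 1 / lam 1)"
    using lam by (simp add: cd ef field_simps)
  moreover have "1 * 1 \<le> (mu 1 / lam 1) * (mu 1 / lam 1)"
    using lam by (intro mult_mono) auto
  ultimately have "1 \<le> (c + d - 1) * (e + f - 1)" by simp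
  moreover have "0 < c + d - 1" "0 < e + f - 1" using lam by (simp_all add: cd ef)
  ultimately have "gap_maps (\<lambda>x. 1 - linfrac c d (1 - x)) (linfrac e f)"
    using ce by (intro gap_maps_linfrac) auto
  then show ?thesis
    by (rule gap_maps_cong) (simp_all add: return_map_linfrac c_def d_def e_def f_def)
qed

lemma next_point_from_side_1_in_01:
  assumes "x \<in> {0..1}"
  shows "fst (next_point 2 (x, 1)) \<in> {0..1}" "fst (next_point 3 (x, 1)) \<in> {0..1}"
  using linfrac_in_01[OF coeffs_from_side_1(1,2), of "1 - x"] linfrac_in_01[OF coeffs_from_side_1(3,4) assms]
    assms
  unfolding next_point_1_to_2 next_point_1_to_3[OF assms] by auto

lemma next_point_from_side_1_antimono:
  assumes "x \<in> {0..1}" "y \<in> {0..1}" "x \<le> y"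
  shows "fst (next_point 2 (y, 1)) \<le> fst (next_point 2 (x, 1))"
    and "fst (next_point 3 (y, 1)) \<le> fst (next_point 3 (x, 1))"
  using strict_mono_on_leD[OF strict_mono_on_linfrac[OF coeffs_from_side_1(1,2)], of "1 - y" "1 - x"]
    strict_mono_on_leD[OF strict_mono_on_linfrac[OF coeffs_from_side_1(3,4)], of x y] assms
  unfolding next_point_1_to_2 next_point_1_to_3[OF assms(1)] next_point_1_to_3[OF assms(2)] by auto

lemma next_point_from_side_1_inside:
  assumes "s \<in> {0<..<1}"
  shows "0 < fst (next_point 2 (s, 1))" "fst (next_point 3 (s, 1)) < 1"
proof -
  have "s \<in> {0..1}" using assms by simp
  then show "0 < fst (next_point 2 (s, 1))" "fst (next_point 3 (s, 1)) < 1"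
    using linfrac_pos[OF coeffs_from_side_1(1,2), of "1 - s"] linfrac_pos[OF coeffs_from_side_1(3,4), of s]
      assms
    unfolding next_point_1_to_2 next_point_1_to_3[OF \<open>s \<in> {0..1}\<close>] by auto
qed

definition interleave :: "(nat \<Rightarrow> real) \<Rightarrow> (nat \<Rightarrow> bool) \<Rightarrow> nat \<Rightarrow> real \<times> nat" where
  "interleave x w t = (if even t then (x (t div 2), 1)
     else next_point (if w (t div 2) then 3 else 2) (x (t div 2), 1))"

lemma interleave_even: "interleave x w (2 * k) = (x k, 1)"
  by (simp add: interleave_def)

lemma interleave_odd: "interleave x w (Suc (2 * k)) = next_point (if w k then 3 else 2) (x k, 1)"
  by (simp add: interleave_def)

lemma nonperiodic_interleave:
  assumes "\<And>q. q \<ge> 1 \<Longrightarrow> \<nexists>N. \<forall>n\<ge>N. w (n + q) = w n"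
  shows "nonperiodic (interleave x w)"
  using assms by (intro nonperiodic_of_side_pattern) (simp_all add: interleave_even interleave_odd side_def)

definition successor :: "(nat \<Rightarrow> real) \<Rightarrow> real \<times> nat \<Rightarrow> real \<times> nat \<Rightarrow> bool" where
  "successor d p q \<longleftrightarrow> (\<exists>j. rule d p j \<and> side q = j \<and> pt q = fmap lam mu j (pt p))"

lemma successor_next_point:
  assumes "snd p \<in> {1,2,3}" "fst p \<in> {0..1}" "j \<in> {1,2,3}" "rule d p j"
  shows "successor d p (next_point j p)"
  using pt_next_point[of "snd p" j "fst p"] assms by (auto simp: successor_def side_def)

lemma rule_back_to_side_1:
  assumes x: "x \<in> {0..1}" and s: "s \<in> {0..1}" and switch: "if c then s \<le> x else x \<le> s"
    and d: "d 2 < fst (next_point 2 (s, 1))" "fst (next_point 3 (s, 1)) < d 3"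
  shows "rule d (next_point (if c then 3 else 2) (x, 1)) 1"
proof (cases c)
  case True
  then have "fst (next_point 3 (x, 1)) < d 3"
    using next_point_from_side_1_antimono(2)[OF s x] switch d(2) by simp
  then show ?thesis using True by (simp add: rule_def)
next
  case False
  then have "d 2 < fst (next_point 2 (x, 1))"
    using next_point_from_side_1_antimono(1)[OF x s] switch d(1) by simp
  then show ?thesis using False by (simp add: rule_def)
qed

lemma trajectory_interleave:
  assumes x: "\<And>t. x t \<in> {0..1}" and step: "\<And>t. x (Suc t) = return_map (w t) (x t)"
    and switch: "\<And>t. if w t then s \<le> x t else x t \<le> s" and s: "s \<in> {0..1}"
    and d: "d 1 = s" "d 2 < fst (next_point 2 (s, 1))" "fst (next_point 3 (s, 1)) < d 3"
  shows "trajectory lam mu d (interleave x w)"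
proof -
  have "snd (interleave x w t) \<in> {1,2,3} \<and> fst (interleave x w t) \<in> {0..1} \<and>
    successor d (interleave x w t) (interleave x w (Suc t))" for t
  proof (cases "even t")
    case True
    then obtain k where t: "t = 2 * k" by blast
    have "rule d (x k, 1) (if w k then 3 else 2)" using switch[of k] d(1) by (auto simp: rule_def)
    then show ?thesis
      using successor_next_point[of "(x k, 1)"] x by (simp add: t interleave_even interleave_odd)
  next
    case False
    then obtain k where t: "t = Suc (2 * k)" by (metis oddE add.commute plus_1_eq_Suc)
    define p where "p = next_point (if w k then 3 else 2) (x k, 1)"
    have "interleave x w (Suc t) = next_point 1 p"
      using interleave_even[of x w "Suc k"] step[of k] by (simp add: t p_def return_map_def prod_eq_iff)
    moreover have "snd p \<in> {1,2,3}" "fst p \<in> {0..1}"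
      using next_point_from_side_1_in_01[OF x] by (simp_all add: p_def)
    moreover have "rule d p 1" using rule_back_to_side_1[OF x s switch d(2,3)] by (simp add: p_def)
    ultimately show ?thesis using successor_next_point[of p] by (simp add: t interleave_odd p_def)
  qed
  then show ?thesis by (simp add: trajectory_def successor_def)
qed

lemma uncountable_decision_points:
  assumes "s \<in> {0<..<1}"
  shows "uncountable {d \<in> {0<..<1} \<times> {0<..<1} \<times> {0<..<1}. dfun d 1 = s \<and>
    dfun d 2 < fst (next_point 2 (s, 1)) \<and> fst (next_point 3 (s, 1)) < dfun d 3}"
    (is "uncountable ?S")
proof
  assume "countable ?S"
  define p2 where "p2 = fst (next_point 2 (s, 1))"
  define p3 where "p3 = fst (next_point 3 (s, 1))"
  have p2: "p2 \<in> {0<..1}" and p3: "p3 \<in> {0..<1}"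
    using next_point_from_side_1_inside[OF assms] next_point_from_side_1_in_01[of s] assms
    by (auto simp: p2_def p3_def)
  then have "(\<lambda>d2. (s, d2, (1 + p3) / 2)) ` {0<..<p2} \<subseteq> ?S"
    using assms by (auto simp: dfun_def p2_def p3_def)
  then have "countable ((\<lambda>d2. (s, d2, (1 + p3) / 2)) ` {0<..<p2})"
    using \<open>countable ?S\<close> countable_subset by blast
  then have "countable {0<..<p2}" by (rule countable_image_inj_on) (simp add: inj_on_def)
  then show False using p2 uncountable_open_interval[of 0 p2] by simp
qed

end

theorem theorem3p3:
  fixes lam mu :: "nat \<Rightarrow> real"
  assumes "\<forall>i\<in>{1,2,3}. lam i > 0 \<and> mu i > 0 \<and> lam i / mu i < 1"
    and "lam 1 / mu 1 + lam 2 / mu 2 + lam 3 / mu 3 > 1"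
  shows "\<exists>S :: (real \<times> real \<times> real) set.
           uncountable S \<and> S \<subseteq> {0<..<1} \<times> {0<..<1} \<times> {0<..<1} \<and>
           (\<forall>d\<in>S. \<exists>z. trajectory lam mu (dfun d) z \<and> nonperiodic z)"
proof -
  interpret triangle_rates lam mu
    using assms(1) by unfold_locales (auto simp: divide_less_eq)
  obtain s x w where s: "s \<in> {0<..<1}" and x: "\<forall>t. x t \<in> {0..1}"
    and step: "\<forall>t. x (Suc t) = (if w t then return_map True else return_map False) (x t)"
    and switch: "\<forall>t. if w t then s \<le> x t else x t \<le> s"
    and aperiodic: "\<forall>q\<ge>1. \<nexists>N. \<forall>n\<ge>N. w (n + q) = w n"
    using gap_maps.exists_aperiodic_itinerary[OF gap_maps_return_map] by blast
  define S where "S = {d \<in> {0<..<1} \<times> {0<..<1} \<times> {0<..<1}. dfun d 1 = s \<and>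
    dfun d 2 < fst (next_point 2 (s, 1)) \<and> fst (next_point 3 (s, 1)) < dfun d 3}"
  have "trajectory lam mu (dfun d) (interleave x w) \<and> nonperiodic (interleave x w)" if "d \<in> S" for d
  proof
    show "trajectory lam mu (dfun d) (interleave x w)"
      using that step switch x s by (intro trajectory_interleave[where s = s]) (auto simp: S_def)
    show "nonperiodic (interleave x w)" using aperiodic by (intro nonperiodic_interleave) auto
  qed
  moreover have "uncountable S" using uncountable_decision_points[OF s] by (simp add: S_def)
  moreover have "S \<subseteq> {0<..<1} \<times> {0<..<1} \<times> {0<..<1}" by (auto simp: S_def)
  ultimately show ?thesis by blast
qed

end
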